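(* For all integers $s,t$ with $0\leq s\leq t$ and $t\geq 1$, the complete bipartite graph $K_{s,t}$ (where $K_{0,t}=\overline{K_t}$) satisfies $\operatorname{th}_{\operatorname{H}}(K_{s,t})=\lceil 2\sqrt{t}+s-1\rceil$. Since $\kappa(K_{s,t})=s$ and $|V(K_{s,t})|=s+t$, this shows the bound $\operatorname{th}_{\operatorname{H}}(G)\geq\lceil 2\sqrt{n-\kappa}+\kappa-1\rceil$ (for $G$ of order $n$ and vertex connectivity $\kappa$) is attained for every $\kappa\geq 0$.
   Context: All graphs are finite, simple and undirected; $\kappa$ denotes vertex connectivity. Hopping color change rule: a blue vertex $v$ may force a white vertex $w$ to become blue if $v$ has not previously performed a force and every neighbor of $v$ is blue. For an initial blue set $B$, a chronological list of forces of $B$ is a sequence of such forces applied one at a time until no further force is possible; its underlying unordered set is a set of forces of $B$. $B$ is a hopping forcing set if some chronological list of forces of $B$ turns all vertices blue. For a set of forces $\mathcal F$ of $B$, let $\mathcal F^{(0)}=B$ and for $t\geq1$ let $\mathcal F^{(t)}$ be the set of vertices $w\notin U_{t-1}:=\bigcup_{i=0}^{t-1}\mathcal F^{(i)}$ for which there is $(v\to w)\in\mathcal F$ with $v\in U_{t-1}$ and all neighbors of $v$ in $U_{t-1}$. $\operatorname{pt}_{\operatorname{H}}(G;\mathcal F)$ is the least $t$ with $\bigcup_{i=0}^t\mathcal F^{(i)}=V(G)$ ($\infty$ if none); $\operatorname{pt}_{\operatorname{H}}(G;B)$ is the minimum of $\operatorname{pt}_{\operatorname{H}}(G;\mathcal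 F)$ over sets of forces $\mathcal F$ of $B$ ($\infty$ if $B$ is not a hopping forcing set). $\operatorname{th}_{\operatorname{H}}(G)=\min_{B\subseteq V(G)}\big(|B|+\operatorname{pt}_{\operatorname{H}}(G;B)\big)$. *)

theory Defs
  imports Complex_Main "HOL-Library.Extended_Nat"
begin

text \<open>A finite simple graph is given by a vertex set V and a symmetric irreflexive
  adjacency relation E (only its restriction to V matters).\<close>

definition nbrs :: "'a set \<Rightarrow> ('a \<Rightarrow> 'a \<Rightarrow> bool) \<Rightarrow> 'a \<Rightarrow> 'a set" where
  "nbrs V E v = {u \<in> V. E v u}"

text \<open>v may force w, given current blue set Bl and set Us of vertices that already forced.\<close>
definition can_force :: "'a set \<Rightarrow> ('a \<Rightarrow> 'a \<Rightarrow> bool) \<Rightarrow> 'a set \<Rightarrow> 'a set \<Rightarrow> 'a \<Rightarrow> 'a \<Rightarrow> bool" where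
  "can_force V E Bl Us v w \<longleftrightarrow>
     v \<in> Bl \<and> v \<notin> Us \<and> nbrs V E v \<subseteq> Bl \<and> w \<in> V \<and> w \<notin> Bl"

fun chron :: "'a set \<Rightarrow> ('a \<Rightarrow> 'a \<Rightarrow> bool) \<Rightarrow> 'a set \<Rightarrow> 'a set \<Rightarrow> ('a \<times> 'a) list \<Rightarrow> bool" where
  "chron V E Bl Us [] = (\<not> (\<exists>v w. can_force V E Bl Us v w))"
| "chron V E Bl Us ((v, w) # fs) =
     (can_force V E Bl Us v w \<and> chron V E (insert w Bl) (insert v Us) fs)"

definition chron_list :: "'a set \<Rightarrow> ('a \<Rightarrow> 'a \<Rightarrow> bool) \<Rightarrow> 'a set \<Rightarrow> ('a \<times> 'a) list \<Rightarrow> bool" where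
  "chron_list V E B fs \<longleftrightarrow> chron V E B {} fs"

definition force_set :: "'a set \<Rightarrow> ('a \<Rightarrow> 'a \<Rightarrow> bool) \<Rightarrow> 'a set \<Rightarrow> ('a \<times> 'a) set \<Rightarrow> bool" where
  "force_set V E B F \<longleftrightarrow> (\<exists>fs. chron_list V E B fs \<and> F = set fs)"

definition hopping_forcing_set :: "'a set \<Rightarrow> ('a \<Rightarrow> 'a \<Rightarrow> bool) \<Rightarrow> 'a set \<Rightarrow> bool" where
  "hopping_forcing_set V E B \<longleftrightarrow> (\<exists>fs. chron_list V E B fs \<and> B \<union> snd ` set fs = V)"

text \<open>U_t = union of F^(0), ..., F^(t).\<close>
fun rounds :: "'a set \<Rightarrow> ('a \<Rightarrow> 'a \<Rightarrow> bool) \<Rightarrow> 'a set \<Rightarrow> ('a \<times> 'a) set \<Rightarrow> nat \<Rightarrow> 'a set" where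
  "rounds V E B F 0 = B"
| "rounds V E B F (Suc t) = rounds V E B F t \<union>
     {w. w \<notin> rounds V E B F t \<and>
         (\<exists>v. (v, w) \<in> F \<and> v \<in> rounds V E B F t \<and> nbrs V E v \<subseteq> rounds V E B F t)}"

definition pt_H_forces :: "'a set \<Rightarrow> ('a \<Rightarrow> 'a \<Rightarrow> bool) \<Rightarrow> 'a set \<Rightarrow> ('a \<times> 'a) set \<Rightarrow> enat" where
  "pt_H_forces V E B F =
     (if \<exists>t. rounds V E B F t = V then enat (LEAST t. rounds V E B F t = V) else \<infinity>)"

definition pt_H :: "'a set \<Rightarrow> ('a \<Rightarrow> 'a \<Rightarrow> bool) \<Rightarrow> 'a set \<Rightarrow> enat" where
  "pt_H V E B =
     (if hopping_forcing_set V E B then (INF F \<in> {F. force_set V E B F}. pt_H_forces V E B F)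
      else \<infinity>)"

definition th_H :: "'a set \<Rightarrow> ('a \<Rightarrow> 'a \<Rightarrow> bool) \<Rightarrow> enat" where
  "th_H V E = (INF B \<in> Pow V. enat (card B) + pt_H V E B)"

definition Kst_V :: "nat \<Rightarrow> nat \<Rightarrow> (nat + nat) set" where
  "Kst_V s t = Inl ` {..<s} \<union> Inr ` {..<t}"

definition Kst_E :: "(nat + nat) \<Rightarrow> (nat + nat) \<Rightarrow> bool" where
  "Kst_E x y \<longleftrightarrow> isl x \<noteq> isl y"

end

theory Submission
  imports Defs
begin

text \<open>
  If neither part of \<open>K\<^sub>s\<^sub>,\<^sub>t\<close> lies inside the initial blue set \<open>B\<close>, no vertex of \<open>B\<close>
  has all its neighbours blue and nothing is ever forced. So some part, of size \<open>m\<close>, is blue;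
  let the other part have size \<open>n\<close>, of which \<open>c\<close> vertices are in \<open>B\<close>. A vertex of the blue part
  with all neighbours blue only exists once everything is blue, so before the end only vertices
  of the other part force, and such a vertex has all neighbours blue from the moment it is blue.
  Hence every vertex turning blue in round \<open>k + 1\<close> is forced by a distinct vertex that turned blue
  in round \<open>k\<close>, each round colours at most \<open>c\<close> vertices, \<open>n \<le> c (p + 1)\<close> for propagation time
  \<open>p\<close>, and by AM-GM \<open>|B| + p \<ge> m + 2\<surd>n - 1\<close>; as \<open>s \<le> t\<close>, this is smallest for \<open>m = s\<close>.
  Conversely, with the \<open>s\<close>-part and \<open>b\<close> vertices of the \<open>t\<close>-part blue, letting vertex \<open>i\<close> of
  the \<open>t\<close>-part force vertex \<open>i + b\<close> colours \<open>b\<close> new vertices per round, so \<open>p\<close> rounds suffice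
  once \<open>t \<le> b (p + 1)\<close>; taking \<open>b\<close> and \<open>p + 1\<close> to be the two halves of \<open>\<lceil>2\<surd>t\<rceil>\<close> attains the bound.
\<close>

lemma chron_forcers_distinct:
  "chron V E Bl Us fs \<Longrightarrow> distinct (map fst fs) \<and> fst ` set fs \<inter> Us = {}"
  by (induction V E Bl Us fs rule: chron.induct) (force simp: can_force_def)+

lemma chron_targets_subset: "chron V E Bl Us fs \<Longrightarrow> snd ` set fs \<subseteq> V"
  by (induction V E Bl Us fs rule: chron.induct) (auto simp: can_force_def)

lemma chron_list_single_valued: "chron_list V E B fs \<Longrightarrow> single_valued (set fs)"
  unfolding chron_list_def
  by (auto intro!: single_valuedI dest: chron_forcers_distinct eq_key_imp_eq_value)

lemma rounds_mono: "m \<le> n \<Longrightarrow> rounds V E B F m \<subseteq> rounds V E B F n"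
  by (induction n) (auto simp: le_Suc_eq)

lemma rounds_subset_targets: "rounds V E B F k \<subseteq> B \<union> snd ` F"
  by (induction k) (auto intro: rev_image_eqI)

lemma rounds_eq_if_none_saturated:
  "\<forall>v\<in>B. \<not> nbrs V E v \<subseteq> B \<Longrightarrow> rounds V E B F k = B"
  by (induction k) auto

text \<open>\<open>new_blue V E B F k\<close> is the paper's \<open>F\<^sup>(\<^sup>k\<^sup>+\<^sup>1\<^sup>)\<close>, not \<open>F\<^sup>(\<^sup>k\<^sup>)\<close>.\<close>

definition new_blue :: "'a set \<Rightarrow> ('a \<Rightarrow> 'a \<Rightarrow> bool) \<Rightarrow> 'a set \<Rightarrow> ('a \<times> 'a) set \<Rightarrow> nat \<Rightarrow> 'a set"
  where "new_blue V E B F k = rounds V E B F (Suc k) - rounds V E B F k"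

lemma rounds_eq_Union_new_blue: "rounds V E B F n = B \<union> (\<Union>k<n. new_blue V E B F k)"
  by (induction n) (auto simp: new_blue_def lessThan_Suc)

lemma pt_H_le:
  assumes chron: "chron_list V E B fs" and "B \<subseteq> V" and full: "rounds V E B (set fs) p = V"
  shows "pt_H V E B \<le> enat p"
proof -
  have "B \<union> snd ` set fs = V"
    using rounds_subset_targets[of V E B "set fs" p] chron_targets_subset[of V E B "{}" fs]
      chron \<open>B \<subseteq> V\<close> full by (auto simp: chron_list_def)
  with chron have "hopping_forcing_set V E B" by (auto simp: hopping_forcing_set_def)
  with chron have "pt_H V E B \<le> pt_H_forces V E B (set fs)"
    unfolding pt_H_def by (auto simp: force_set_def intro!: INF_lower)
  also have "\<dots> \<le> enat p"
    using full by (auto simp: pt_H_forces_def intro: Least_le)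
  finally show ?thesis .
qed

lemma card_add_pt_H_ge:
  assumes "\<And>fs p. chron_list V E B fs \<Longrightarrow> rounds V E B (set fs) p = V \<Longrightarrow>
      \<forall>k<p. rounds V E B (set fs) k \<noteq> V \<Longrightarrow> n \<le> card B + p"
  shows "enat n \<le> enat (card B) + pt_H V E B"
proof (cases "hopping_forcing_set V E B")
  case False
  then show ?thesis by (simp add: pt_H_def)
next
  case True
  have "enat (n - card B) \<le> pt_H_forces V E B F" if "force_set V E B F" for F
  proof (cases "\<exists>k. rounds V E B F k = V")
    case True
    obtain fs where "chron_list V E B fs" and F: "F = set fs"
      using \<open>force_set V E B F\<close> by (auto simp: force_set_def)
    define p where "p = (LEAST k. rounds V E B F k = V)"
    have "rounds V E B F p = V" "\<forall>k<p. rounds V E B F k \<noteq> V"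
      unfolding p_def using LeastI_ex[OF True] not_less_Least by blast+
    with assms \<open>chron_list V E B fs\<close> have "n \<le> card B + p" unfolding F by blast
    then show ?thesis using True by (simp add: pt_H_forces_def p_def)
  qed (simp add: pt_H_forces_def)
  with True have "enat (n - card B) \<le> pt_H V E B"
    unfolding pt_H_def by (auto intro: INF_greatest)
  then have "enat (card B) + enat (n - card B) \<le> enat (card B) + pt_H V E B"
    by (rule add_left_mono)
  moreover have "enat n \<le> enat (card B) + enat (n - card B)"
    by simp
  ultimately show ?thesis
    by (rule order_trans[rotated])
qed

lemma th_H_eqI:
  assumes "\<And>B. B \<subseteq> V \<Longrightarrow> enat n \<le> enat (card B) + pt_H V E B"
    and "B0 \<subseteq> V" and "enat (card B0) + pt_H V E B0 \<le> enat n"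
  shows "th_H V E = enat n"
  unfolding th_H_def
  by (rule antisym) (use assms in \<open>auto intro: INF_lower2 INF_greatest\<close>)

lemma card_le_if_single_valued_cover:
  assumes "finite A" and "single_valued F" and "C \<subseteq> F `` A"
  shows "card C \<le> card A"
proof -
  have "C \<subseteq> (\<lambda>v. THE w. (v, w) \<in> F) ` A"
    using assms(2,3) by (force intro: the_equality[symmetric] dest: single_valuedD)
  then show ?thesis
    using assms(1) by (meson card_image_le card_mono finite_imageI order_trans)
qed

lemma two_sqrt_le_add_if_le_mult:
  fixes x a c :: real
  assumes "0 \<le> a" and "0 \<le> c" and "x \<le> a * c"
  shows "2 * sqrt x \<le> a + c"
proof -
  have "sqrt x \<le> sqrt (a * c)"
    using assms(3) by simp
  also have "\<dots> \<le> (a + c) / 2"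
    using assms(1,2) by (rule arith_geo_mean_sqrt)
  finally show ?thesis by simp
qed

lemma two_sqrt_add_le:
  fixes x y :: real
  assumes "1 \<le> x" and "x \<le> y"
  shows "2 * sqrt y + x \<le> y + 2 * sqrt x"
proof -
  have "sqrt x \<le> sqrt y" and "1 \<le> sqrt x"
    using assms by simp_all
  then have "0 \<le> (sqrt y - sqrt x) * (sqrt y + sqrt x - 2)"
    by (intro mult_nonneg_nonneg) linarith+
  also have "\<dots> = y - x - 2 * sqrt y + 2 * sqrt x"
    using assms by (simp add: algebra_simps)
  finally show ?thesis by simp
qed

lemma square_le_four_mult_halves: "n\<^sup>2 \<le> 4 * (n div 2 * (n - n div 2)) + 1" for n :: nat
  by (cases "even n") (auto elim!: evenE oddE simp: power2_eq_square algebra_simps)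

lemma exists_block_cover:
  fixes t :: nat
  assumes "1 \<le> t"
  obtains b p where "1 \<le> b" and "b \<le> t" and "t \<le> b * (p + 1)" and "real (b + p) < 2 * sqrt (real t)"
proof -
  define n where "n = nat \<lceil>2 * sqrt (real t)\<rceil>"
  have "1 \<le> sqrt (real t)"
    using assms by simp
  then have n: "2 * sqrt (real t) \<le> real n" "real n < 2 * sqrt (real t) + 1" "2 \<le> n"
    unfolding n_def by linarith+
  then have "(2 * sqrt (real t))\<^sup>2 \<le> (real n)\<^sup>2"
    by (intro power_mono) auto
  then have "4 * t \<le> n\<^sup>2"
    by (simp add: power_mult_distrib flip: of_nat_power)
  with square_le_four_mult_halves[of n] have t_le: "t \<le> n div 2 * (n - n div 2)"
    by linarith
  define b where "b = min (n div 2) t"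
  define p where "p = n - n div 2 - 1"
  have p: "p + 1 = n - n div 2" and b: "1 \<le> b" "b \<le> n div 2"
    using n(3) assms unfolding p_def b_def by simp_all
  have "t \<le> b * (p + 1)"
  proof (cases "n div 2 \<le> t")
    case True
    then show ?thesis using t_le p by (simp add: b_def)
  qed (simp add: b_def)
  moreover have "real (b + p) < 2 * sqrt (real t)"
    using n(2) p b(2) by linarith
  ultimately show ?thesis
    using b by (intro that[of b p]) (simp_all add: b_def)
qed

context
  fixes V :: "'a set" and E :: "'a \<Rightarrow> 'a \<Rightarrow> bool" and B :: "'a set"
    and F :: "('a \<times> 'a) set" and P :: "'a \<Rightarrow> bool"
  assumes complete_bipartite: "\<And>x y. E x y \<longleftrightarrow> P x \<noteq> P y"
    and P_side_blue: "{v \<in> V. P v} \<subseteq> B"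
begin

lemma P_side_subset_rounds: "{v \<in> V. P v} \<subseteq> rounds V E B F k"
  using P_side_blue rounds_mono[of 0 k V E B F] by auto

lemma saturated_if_not_P: "\<not> P v \<Longrightarrow> nbrs V E v \<subseteq> rounds V E B F k"
  using P_side_subset_rounds by (auto simp: nbrs_def complete_bipartite)

lemma all_blue_if_P_saturated:
  assumes "P v" and "nbrs V E v \<subseteq> rounds V E B F k"
  shows "V \<subseteq> rounds V E B F k"
  using assms P_side_subset_rounds[of k] by (auto simp: nbrs_def complete_bipartite)

lemma new_blue_forcer:
  assumes "w \<in> new_blue V E B F k" and "\<not> V \<subseteq> rounds V E B F k"
  obtains v where "(v, w) \<in> F" and "v \<in> rounds V E B F k" and "\<not> P v"
  using assms all_blue_if_P_saturated by (auto simp: new_blue_def)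

lemma new_blue_0_forced_from_B:
  "w \<in> new_blue V E B F 0 \<Longrightarrow> \<not> V \<subseteq> B \<Longrightarrow> w \<in> F `` (B - {v. P v})"
  by (erule new_blue_forcer) auto

lemma new_blue_Suc_forced_from_new_blue:
  assumes "w \<in> new_blue V E B F (Suc k)" and "\<not> V \<subseteq> rounds V E B F (Suc k)"
  shows "w \<in> F `` new_blue V E B F k"
proof -
  obtain v where vw: "(v, w) \<in> F" and v: "v \<in> rounds V E B F (Suc k)" and "\<not> P v"
    using assms by (rule new_blue_forcer)
  moreover have "v \<notin> rounds V E B F k"
  proof
    assume "v \<in> rounds V E B F k"
    with vw \<open>\<not> P v\<close> have "w \<in> rounds V E B F (Suc k)"
      using saturated_if_not_P[of v k] by auto
    with assms(1) show False unfolding new_blue_def by blast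
  qed
  ultimately have "v \<in> new_blue V E B F k"
    unfolding new_blue_def by blast
  with vw show ?thesis by blast
qed

context
  fixes p :: nat
  assumes finite: "finite V" and single_valued: "single_valued F"
    and full: "rounds V E B F p = V" and minimal: "\<forall>k<p. rounds V E B F k \<noteq> V"
begin

lemma blue_set_subset: "B \<subseteq> V"
  using full rounds_mono[of 0 p V E B F] by auto

lemma not_all_blue_before: "k < p \<Longrightarrow> \<not> V \<subseteq> rounds V E B F k"
  using minimal full rounds_mono[of k p V E B F] by auto

lemma new_blue_subset: "k < p \<Longrightarrow> new_blue V E B F k \<subseteq> V"
  using full rounds_mono[of "Suc k" p V E B F] by (auto simp: new_blue_def)

lemma card_new_blue_le: "k < p \<Longrightarrow> card (new_blue V E B F k) \<le> card (B - {v. P v})"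
proof (induction k)
  case 0
  have "finite (B - {v. P v})"
    using finite blue_set_subset by (auto intro: finite_subset)
  moreover have "new_blue V E B F 0 \<subseteq> F `` (B - {v. P v})"
    using new_blue_0_forced_from_B not_all_blue_before[OF 0] by auto
  ultimately show ?case
    by (rule card_le_if_single_valued_cover[OF _ single_valued])
next
  case (Suc k)
  have "finite (new_blue V E B F k)"
    using Suc.prems new_blue_subset[of k] finite by (auto intro: finite_subset)
  moreover have "new_blue V E B F (Suc k) \<subseteq> F `` new_blue V E B F k"
    using new_blue_Suc_forced_from_new_blue not_all_blue_before[OF Suc.prems] by blast
  ultimately have "card (new_blue V E B F (Suc k)) \<le> card (new_blue V E B F k)"
    by (rule card_le_if_single_valued_cover[OF _ single_valued])
  with Suc show ?case by simp
qed

lemma card_not_P_side_le: "card {v \<in> V. \<not> P v} \<le> card (B - {v. P v}) * (p + 1)"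
proof -
  have "{v \<in> V. \<not> P v} \<subseteq> (B - {v. P v}) \<union> (\<Union>k<p. new_blue V E B F k)"
    using full rounds_eq_Union_new_blue[of V E B F p] by auto
  moreover have "finite ((B - {v. P v}) \<union> (\<Union>k<p. new_blue V E B F k))"
    using finite blue_set_subset new_blue_subset by (auto intro: finite_subset)
  ultimately have "card {v \<in> V. \<not> P v} \<le> card ((B - {v. P v}) \<union> (\<Union>k<p. new_blue V E B F k))"
    by (rule card_mono[rotated])
  also have "\<dots> \<le> card (B - {v. P v}) + (\<Sum>k<p. card (new_blue V E B F k))"
    using card_Un_le card_UN_le[of "{..<p}" "new_blue V E B F"] by (meson add_left_mono finite_lessThan order_trans)
  also have "\<dots> \<le> card (B - {v. P v}) + p * card (B - {v. P v})"
    using sum_bounded_above[of "{..<p}" "\<lambda>k. card (new_blue V E B F k)"] card_new_blue_le by auto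
  finally show ?thesis by (simp add: mult.commute)
qed

lemma card_P_side_add_two_sqrt_le:
  "real (card {v \<in> V. P v}) + 2 * sqrt (real (card {v \<in> V. \<not> P v})) \<le> real (card B + p + 1)"
proof -
  have "B - {v. P v} = B - {v \<in> V. P v}"
    using blue_set_subset by auto
  with blue_set_subset have "card B = card {v \<in> V. P v} + card (B - {v. P v})"
    using finite P_side_blue card_mono[of B "{v \<in> V. P v}"]
    by (simp add: card_Diff_subset finite_subset)
  moreover have "real (card {v \<in> V. \<not> P v}) \<le> real (card (B - {v. P v})) * real (p + 1)"
    using card_not_P_side_le by (metis of_nat_le_iff of_nat_mult)
  then have "2 * sqrt (real (card {v \<in> V. \<not> P v})) \<le> real (card (B - {v. P v})) + real (p + 1)"
    by (intro two_sqrt_le_add_if_le_mult) simp_all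
  ultimately show ?thesis by simp
qed

end

end

lemma nbrs_Kst_Inl: "nbrs (Kst_V s t) Kst_E (Inl i) = Inr ` {..<t}"
  by (auto simp: nbrs_def Kst_V_def Kst_E_def)

lemma nbrs_Kst_Inr: "nbrs (Kst_V s t) Kst_E (Inr i) = Inl ` {..<s}"
  by (auto simp: nbrs_def Kst_V_def Kst_E_def)

lemma Kst_V_isl: "{v \<in> Kst_V s t. isl v} = Inl ` {..<s}"
  by (auto simp: Kst_V_def)

lemma Kst_V_not_isl: "{v \<in> Kst_V s t. \<not> isl v} = Inr ` {..<t}"
  by (auto simp: Kst_V_def)

lemma Kst_bound_le_card_add_rounds:
  fixes s t :: nat
  assumes "s \<le> t" and chron: "chron_list (Kst_V s t) Kst_E B fs"
    and full: "rounds (Kst_V s t) Kst_E B (set fs) p = Kst_V s t"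
    and minimal: "\<forall>k<p. rounds (Kst_V s t) Kst_E B (set fs) k \<noteq> Kst_V s t"
  shows "nat \<lceil>2 * sqrt (real t) + real s - 1\<rceil> \<le> card B + p"
proof -
  have finite: "finite (Kst_V s t)"
    by (simp add: Kst_V_def)
  have single_valued: "single_valued (set fs)"
    using chron by (rule chron_list_single_valued)
  note side_bound = card_P_side_add_two_sqrt_le[OF _ _ finite single_valued full minimal]
  consider "Inl ` {..<s} \<subseteq> B" | "Inr ` {..<t} \<subseteq> B" and "1 \<le> s"
    | "\<not> Inl ` {..<s} \<subseteq> B" and "\<not> Inr ` {..<t} \<subseteq> B"
    by (cases s) auto
  then have "2 * sqrt (real t) + real s - 1 \<le> real (card B + p)"
  proof cases
    case 1
    then show ?thesis
      using side_bound[of isl] by (simp add: Kst_E_def Kst_V_isl Kst_V_not_isl card_image)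
  next
    case 2
    then have "2 * sqrt (real t) + real s \<le> real t + 2 * sqrt (real s)"
      using \<open>s \<le> t\<close> by (intro two_sqrt_add_le) simp_all
    then show ?thesis
      using 2 side_bound[of "\<lambda>v. \<not> isl v"] by (simp add: Kst_E_def Kst_V_isl Kst_V_not_isl card_image)
  next
    case 3
    then have "\<forall>v\<in>B. \<not> nbrs (Kst_V s t) Kst_E v \<subseteq> B"
      by (metis nbrs_Kst_Inl nbrs_Kst_Inr sum.exhaust)
    then have "B = Kst_V s t"
      using full rounds_eq_if_none_saturated by metis
    with 3 show ?thesis by (auto simp: Kst_V_def)
  qed
  then show ?thesis
    by (simp only: nat_ceiling_le_eq)
qed

definition shift_forces :: "nat \<Rightarrow> nat \<Rightarrow> ((nat + nat) \<times> (nat + nat)) list" where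
  "shift_forces b t = map (\<lambda>i. (Inr i, Inr (i + b))) [0..<t - b]"

lemma chron_shift_forces_from:
  assumes "1 \<le> b" and "b \<le> t"
  shows "j \<le> t - b \<Longrightarrow> chron (Kst_V s t) Kst_E (Inl ` {..<s} \<union> Inr ` {..<b + j}) (Inr ` {..<j})
           (map (\<lambda>i. (Inr i, Inr (i + b))) [j..<t - b])"
proof (induction "t - b - j" arbitrary: j)
  case 0
  then have "b + j = t"
    using \<open>b \<le> t\<close> by simp
  then have "Inl ` {..<s} \<union> Inr ` {..<b + j} = Kst_V s t"
    by (simp add: Kst_V_def)
  with 0 show ?case by (auto simp: can_force_def)
next
  case (Suc d)
  then have j: "j < t - b" by simp
  have "chron (Kst_V s t) Kst_E (Inl ` {..<s} \<union> Inr ` {..<b + Suc j}) (Inr ` {..<Suc j})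
           (map (\<lambda>i. (Inr i, Inr (i + b))) [Suc j..<t - b])"
    using Suc.hyps(1)[of "Suc j"] Suc.hyps(2) j by simp
  moreover have "insert (Inr (j + b)) (Inl ` {..<s} \<union> Inr ` {..<b + j}) = Inl ` {..<s} \<union> Inr ` {..<b + Suc j}"
    by (auto simp: lessThan_Suc add.commute)
  moreover have "insert (Inr j) (Inr ` {..<j}) = (Inr ` {..<Suc j} :: (nat + nat) set)"
    by (auto simp: lessThan_Suc)
  moreover have "can_force (Kst_V s t) Kst_E (Inl ` {..<s} \<union> Inr ` {..<b + j}) (Inr ` {..<j}) (Inr j) (Inr (j + b))"
    using \<open>1 \<le> b\<close> j unfolding can_force_def nbrs_Kst_Inr by (auto simp: Kst_V_def)
  ultimately show ?case
    using j by (simp add: upt_conv_Cons)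
qed

lemma chron_list_shift_forces:
  "1 \<le> b \<Longrightarrow> b \<le> t \<Longrightarrow> chron_list (Kst_V s t) Kst_E (Inl ` {..<s} \<union> Inr ` {..<b}) (shift_forces b t)"
  using chron_shift_forces_from[of b t 0 s] by (simp add: chron_list_def shift_forces_def)

lemma rounds_shift_forces:
  assumes "b \<le> t"
  shows "Inl ` {..<s} \<union> Inr ` {..<min t (b * (k + 1))} \<subseteq>
    rounds (Kst_V s t) Kst_E (Inl ` {..<s} \<union> Inr ` {..<b}) (set (shift_forces b t)) k"
proof (induction k)
  case (Suc k)
  let ?R = "rounds (Kst_V s t) Kst_E (Inl ` {..<s} \<union> Inr ` {..<b}) (set (shift_forces b t))"
  show ?case
  proof
    fix x assume x: "x \<in> Inl ` {..<s} \<union> Inr ` {..<min t (b * (Suc k + 1))}"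
    show "x \<in> ?R (Suc k)"
    proof (cases "x \<in> ?R k")
      case False
      with x Suc.IH obtain j where j: "x = Inr j" "j < min t (b * (Suc k + 1))"
        "\<not> j < min t (b * (k + 1))" by blast
      then have "b \<le> j" and "j - b < min t (b * (k + 1))"
        by (auto simp: algebra_simps)
      moreover have "(Inr (j - b), Inr j) \<in> set (shift_forces b t)"
        using \<open>b \<le> j\<close> j by (auto simp: shift_forces_def intro!: image_eqI[of _ _ "j - b"])
      ultimately show ?thesis
        using False Suc.IH j by (force simp: nbrs_Kst_Inr)
    qed simp
  qed
qed auto

lemma initial_blue_subset_Kst_V: "b \<le> t \<Longrightarrow> Inl ` {..<s} \<union> Inr ` {..<b} \<subseteq> Kst_V s t"
  unfolding Kst_V_def by (intro Un_mono image_mono) auto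

lemma pt_H_Kst_le:
  assumes "1 \<le> b" and "b \<le> t" and "t \<le> b * (p + 1)"
  shows "pt_H (Kst_V s t) Kst_E (Inl ` {..<s} \<union> Inr ` {..<b}) \<le> enat p"
proof -
  let ?R = "rounds (Kst_V s t) Kst_E (Inl ` {..<s} \<union> Inr ` {..<b}) (set (shift_forces b t)) p"
  have chron: "chron_list (Kst_V s t) Kst_E (Inl ` {..<s} \<union> Inr ` {..<b}) (shift_forces b t)"
    using assms(1,2) by (rule chron_list_shift_forces)
  have B: "Inl ` {..<s} \<union> Inr ` {..<b} \<subseteq> Kst_V s t"
    using assms(2) by (rule initial_blue_subset_Kst_V)
  have "snd ` set (shift_forces b t) \<subseteq> Kst_V s t"
    using chron unfolding chron_list_def by (rule chron_targets_subset)
  then have "?R \<subseteq> Kst_V s t"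
    using rounds_subset_targets B by (meson Un_least order_trans)
  moreover have "min t (b * (p + 1)) = t"
    using assms(3) by simp
  then have "Kst_V s t \<subseteq> ?R"
    using rounds_shift_forces[OF assms(2), of s p] by (simp add: Kst_V_def)
  ultimately show ?thesis
    using pt_H_le[OF chron B] by blast
qed

theorem proposition3p7:
  fixes s t :: nat
  assumes "s \<le> t" and "t \<ge> 1"
  shows "th_H (Kst_V s t) Kst_E = enat (nat \<lceil>2 * sqrt (real t) + real s - 1\<rceil>)"
proof -
  obtain b p where "1 \<le> b" "b \<le> t" "t \<le> b * (p + 1)" and bp: "real (b + p) < 2 * sqrt (real t)"
    using exists_block_cover[OF assms(2)] .
  let ?B0 = "Inl ` {..<s} \<union> Inr ` {..<b} :: (nat + nat) set"
  have "card ?B0 = s + b"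
    by (subst card_Un_disjoint) (auto simp: card_image)
  moreover have "pt_H (Kst_V s t) Kst_E ?B0 \<le> enat p"
    using \<open>1 \<le> b\<close> \<open>b \<le> t\<close> \<open>t \<le> b * (p + 1)\<close> by (rule pt_H_Kst_le)
  ultimately have "enat (card ?B0) + pt_H (Kst_V s t) Kst_E ?B0 \<le> enat (s + b + p)"
    by (metis add_left_mono plus_enat_simps(1))
  also have "\<dots> \<le> enat (nat \<lceil>2 * sqrt (real t) + real s - 1\<rceil>)"
    using bp by (simp add: le_nat_iff le_ceiling_iff less_ceiling_iff)
  finally have upper: "enat (card ?B0) + pt_H (Kst_V s t) Kst_E ?B0 \<le> \<dots>" .
  show ?thesis
  proof (rule th_H_eqI)
    show "enat (nat \<lceil>2 * sqrt (real t) + real s - 1\<rceil>) \<le> enat (card B) + pt_H (Kst_V s t) Kst_E B" for B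
      by (rule card_add_pt_H_ge) (rule Kst_bound_le_card_add_rounds[OF assms(1)])
    show "?B0 \<subseteq> Kst_V s t"
      using \<open>b \<le> t\<close> by (rule initial_blue_subset_Kst_V)
  qed (fact upper)
qed

end
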